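(* Let $p:\tilde{Q}\to Q$ be a covering of finite quandles, and let $\Lambda$ be a subgroup of the deck transformation group $\mathrm{Aut}(p)$ that acts freely and transitively on each fiber $p^{-1}(q)$, $q\in Q$. Then there is a function $\phi:Q\times Q\to\Lambda$ such that $\Lambda\times_\phi Q$ is a quandle isomorphic to $\tilde{Q}$.
   Context: A quandle is a set with operation $*$ satisfying $a*a=a$; unique right division; $(a*b)*c=(a*c)*(b*c)$. $R_a(y)=y*a$. A covering is a quandle epimorphism $p:\tilde Q\to Q$ such that $p(y_1)=p(y_2)$ implies $R_{y_1}=R_{y_2}$. Its deck transformation group $\mathrm{Aut}(p)$ is the group of quandle automorphisms $\lambda$ of $\tilde{Q}$ with $p\circ\lambda=p$. For a (not necessarily abelian) group $\Lambda$ and a function $\phi:Q\times Q\to\Lambda$, $\Lambda\times_\phi Q$ denotes the set $\Lambda\times Q$ with $(\lambda,a)*(\mu,b)=(\lambda\phi(a,b),a*b)$. *)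

theory Defs
  imports "HOL-Library.FuncSet"
begin

definition quandle :: "'a set \<Rightarrow> ('a \<Rightarrow> 'a \<Rightarrow> 'a) \<Rightarrow> bool" where
  "quandle X op \<longleftrightarrow>
     (\<forall>a\<in>X. \<forall>b\<in>X. op a b \<in> X) \<and>
     (\<forall>a\<in>X. op a a = a) \<and>
     (\<forall>a\<in>X. \<forall>b\<in>X. \<exists>!c. c \<in> X \<and> op c b = a) \<and>
     (\<forall>a\<in>X. \<forall>b\<in>X. \<forall>c\<in>X. op (op a b) c = op (op a c) (op b c))"

definition quandle_hom :: "'a set \<Rightarrow> ('a \<Rightarrow> 'a \<Rightarrow> 'a) \<Rightarrow> 'b set \<Rightarrow> ('b \<Rightarrow> 'b \<Rightarrow> 'b) \<Rightarrow> ('a \<Rightarrow> 'b) \<Rightarrow> bool" where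
  "quandle_hom X opX Y opY f \<longleftrightarrow>
     f \<in> X \<rightarrow> Y \<and> (\<forall>a\<in>X. \<forall>b\<in>X. f (opX a b) = opY (f a) (f b))"

definition quandle_iso :: "'a set \<Rightarrow> ('a \<Rightarrow> 'a \<Rightarrow> 'a) \<Rightarrow> 'b set \<Rightarrow> ('b \<Rightarrow> 'b \<Rightarrow> 'b) \<Rightarrow> ('a \<Rightarrow> 'b) \<Rightarrow> bool" where
  "quandle_iso X opX Y opY f \<longleftrightarrow> quandle_hom X opX Y opY f \<and> bij_betw f X Y"

definition quandle_covering :: "'a set \<Rightarrow> ('a \<Rightarrow> 'a \<Rightarrow> 'a) \<Rightarrow> 'b set \<Rightarrow> ('b \<Rightarrow> 'b \<Rightarrow> 'b) \<Rightarrow> ('a \<Rightarrow> 'b) \<Rightarrow> bool" where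
  "quandle_covering QT opT Q opQ p \<longleftrightarrow>
     quandle QT opT \<and> quandle Q opQ \<and>
     quandle_hom QT opT Q opQ p \<and> p ` QT = Q \<and>
     (\<forall>y1\<in>QT. \<forall>y2\<in>QT. p y1 = p y2 \<longrightarrow> (\<forall>x\<in>QT. opT x y1 = opT x y2))"

text \<open>Deck transformation group Aut(p): quandle automorphisms l of QT with p \<circ> l = p.
  Elements are represented as extensional functions on QT (so that equality of
  group elements is equality of maps on QT); the group operation is composition.\<close>
definition deck_group :: "'a set \<Rightarrow> ('a \<Rightarrow> 'a \<Rightarrow> 'a) \<Rightarrow> ('a \<Rightarrow> 'b) \<Rightarrow> ('a \<Rightarrow> 'a) set" where
  "deck_group QT opT p =
     {l. l \<in> extensional QT \<and> quandle_iso QT opT QT opT l \<and> (\<forall>y\<in>QT. p (l y) = p y)}"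

definition deck_mult :: "'a set \<Rightarrow> ('a \<Rightarrow> 'a) \<Rightarrow> ('a \<Rightarrow> 'a) \<Rightarrow> ('a \<Rightarrow> 'a)" where
  "deck_mult QT l m = compose QT l m"

definition deck_one :: "'a set \<Rightarrow> ('a \<Rightarrow> 'a)" where
  "deck_one QT = restrict id QT"

definition deck_inv :: "'a set \<Rightarrow> ('a \<Rightarrow> 'a) \<Rightarrow> ('a \<Rightarrow> 'a)" where
  "deck_inv QT l = restrict (inv_into QT l) QT"

definition deck_subgroup :: "'a set \<Rightarrow> ('a \<Rightarrow> 'a \<Rightarrow> 'a) \<Rightarrow> ('a \<Rightarrow> 'b) \<Rightarrow> ('a \<Rightarrow> 'a) set \<Rightarrow> bool" where
  "deck_subgroup QT opT p L \<longleftrightarrow>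
     L \<subseteq> deck_group QT opT p \<and> deck_one QT \<in> L \<and>
     (\<forall>l\<in>L. \<forall>m\<in>L. deck_mult QT l m \<in> L) \<and>
     (\<forall>l\<in>L. deck_inv QT l \<in> L)"

definition acts_freely_transitively_on_fibers ::
  "'a set \<Rightarrow> ('a \<Rightarrow> 'b) \<Rightarrow> 'b set \<Rightarrow> ('a \<Rightarrow> 'a) set \<Rightarrow> bool" where
  "acts_freely_transitively_on_fibers QT p Q L \<longleftrightarrow>
     (\<forall>q\<in>Q. \<forall>y1\<in>QT. \<forall>y2\<in>QT. p y1 = q \<longrightarrow> p y2 = q \<longrightarrow> (\<exists>!l. l \<in> L \<and> l y1 = y2))"

definition ext_op :: "'a set \<Rightarrow> ('b \<Rightarrow> 'b \<Rightarrow> 'b) \<Rightarrow> ('b \<Rightarrow> 'b \<Rightarrow> ('a \<Rightarrow> 'a))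
     \<Rightarrow> (('a \<Rightarrow> 'a) \<times> 'b) \<Rightarrow> (('a \<Rightarrow> 'a) \<times> 'b) \<Rightarrow> (('a \<Rightarrow> 'a) \<times> 'b)" where
  "ext_op QT opQ phi x y = (deck_mult QT (fst x) (phi (snd x) (snd y)), opQ (snd x) (snd y))"

end

theory Submission
  imports Defs
begin

text \<open>Fix a point s q in every fiber; then every element
  of QT is l (s q) for a unique pair (l, q), and since p is a homomorphism, s a * s b lies in the
  fiber of a * b, so s a * s b = phi a b (s (a * b)) for a unique phi a b in L. Deck
  transformations are automorphisms preserving fibers, and in a covering y * z depends on z only
  through p z; hence l (s a) * m (s b) = l (s a * s b) = (l phi a b) (s (a * b)), i.e.
  (l, q) \<mapsto> l (s q) is an isomorphism from L \<times>_phi Q onto QT, along which the quandle axioms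
  pull back.\<close>

lemma bij_betw_ex1_iff:
  assumes "bij_betw f X Y"
  shows "(\<exists>!x. x \<in> X \<and> P (f x)) \<longleftrightarrow> (\<exists>!y. y \<in> Y \<and> P y)"
  using assms unfolding bij_betw_def inj_on_def by blast

lemma quandle_if_iso_to_quandle:
  assumes quandle_Y: "quandle Y opY" and iso: "quandle_iso X opX Y opY f"
    and closed: "\<forall>a\<in>X. \<forall>b\<in>X. opX a b \<in> X"
  shows "quandle X opX"
proof -
  have hom: "\<And>a b. a \<in> X \<Longrightarrow> b \<in> X \<Longrightarrow> f (opX a b) = opY (f a) (f b)"
    and fX: "\<And>a. a \<in> X \<Longrightarrow> f a \<in> Y"
    and bij: "bij_betw f X Y"
    using iso unfolding quandle_iso_def quandle_hom_def by auto
  have inj: "\<And>u v. u \<in> X \<Longrightarrow> v \<in> X \<Longrightarrow> f u = f v \<Longrightarrow> u = v"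
    using bij unfolding bij_betw_def inj_on_def by blast
  have opX: "\<And>a b. a \<in> X \<Longrightarrow> b \<in> X \<Longrightarrow> opX a b \<in> X"
    using closed by blast
  have idem_Y: "\<And>a. a \<in> Y \<Longrightarrow> opY a a = a"
    and div_Y: "\<And>a b. a \<in> Y \<Longrightarrow> b \<in> Y \<Longrightarrow> \<exists>!c. c \<in> Y \<and> opY c b = a"
    and dist_Y: "\<And>a b c. a \<in> Y \<Longrightarrow> b \<in> Y \<Longrightarrow> c \<in> Y \<Longrightarrow>
                   opY (opY a b) c = opY (opY a c) (opY b c)"
    using quandle_Y unfolding quandle_def by blast+
  have idem: "opX a a = a" if "a \<in> X" for a
    using that by (intro inj) (simp_all add: opX hom idem_Y fX)
  have div: "\<exists>!c. c \<in> X \<and> opX c b = a" if a: "a \<in> X" and b: "b \<in> X" for a b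
  proof -
    have "opX c b = a \<longleftrightarrow> opY (f c) (f b) = f a" if "c \<in> X" for c
      using that a b inj[of "opX c b" a] by (auto simp: opX hom)
    then have "(\<exists>!c. c \<in> X \<and> opX c b = a) \<longleftrightarrow> (\<exists>!c. c \<in> X \<and> opY (f c) (f b) = f a)"
      by (metis (no_types, lifting))
    also have "\<dots> \<longleftrightarrow> (\<exists>!d. d \<in> Y \<and> opY d (f b) = f a)"
      by (rule bij_betw_ex1_iff[OF bij])
    finally show ?thesis
      using div_Y[OF fX[OF a] fX[OF b]] by simp
  qed
  have dist: "opX (opX a b) c = opX (opX a c) (opX b c)"
    if "a \<in> X" "b \<in> X" "c \<in> X" for a b c
    using that by (intro inj) (simp_all add: opX hom dist_Y fX)
  show ?thesis
    unfolding quandle_def by (intro conjI ballI opX idem div dist)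
qed

locale simply_transitive_deck_action =
  fixes QT :: "'a set" and opT :: "'a \<Rightarrow> 'a \<Rightarrow> 'a"
    and Q :: "'b set" and opQ :: "'b \<Rightarrow> 'b \<Rightarrow> 'b"
    and p :: "'a \<Rightarrow> 'b" and L :: "('a \<Rightarrow> 'a) set"
  assumes covering: "quandle_covering QT opT Q opQ p"
    and deck: "L \<subseteq> deck_group QT opT p"
    and mult_closed: "\<And>l m. l \<in> L \<Longrightarrow> m \<in> L \<Longrightarrow> deck_mult QT l m \<in> L"
    and free_transitive: "acts_freely_transitively_on_fibers QT p Q L"
begin

lemma quandle_QT: "quandle QT opT"
  and quandle_Q: "quandle Q opQ"
  using covering unfolding quandle_covering_def by simp_all

lemma opT_closed: "a \<in> QT \<Longrightarrow> b \<in> QT \<Longrightarrow> opT a b \<in> QT"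
  using quandle_QT unfolding quandle_def by simp

lemma opQ_closed: "a \<in> Q \<Longrightarrow> b \<in> Q \<Longrightarrow> opQ a b \<in> Q"
  using quandle_Q unfolding quandle_def by simp

lemma p_hom: "a \<in> QT \<Longrightarrow> b \<in> QT \<Longrightarrow> p (opT a b) = opQ (p a) (p b)"
  using covering unfolding quandle_covering_def quandle_hom_def by blast

lemma p_image: "p ` QT = Q"
  using covering unfolding quandle_covering_def by blast

lemma op_right_eq_if_same_fiber:
  "x \<in> QT \<Longrightarrow> y1 \<in> QT \<Longrightarrow> y2 \<in> QT \<Longrightarrow> p y1 = p y2 \<Longrightarrow> opT x y1 = opT x y2"
  using covering unfolding quandle_covering_def by blast

lemma deck_closed: "l \<in> L \<Longrightarrow> y \<in> QT \<Longrightarrow> l y \<in> QT"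
  and deck_hom: "l \<in> L \<Longrightarrow> a \<in> QT \<Longrightarrow> b \<in> QT \<Longrightarrow> l (opT a b) = opT (l a) (l b)"
  and deck_fiber: "l \<in> L \<Longrightarrow> y \<in> QT \<Longrightarrow> p (l y) = p y"
  using deck unfolding deck_group_def quandle_iso_def quandle_hom_def by blast+

lemma deck_unique:
  assumes "y1 \<in> QT" "y2 \<in> QT" "p y1 = p y2"
  shows "\<exists>!l. l \<in> L \<and> l y1 = y2"
proof -
  have "p y1 \<in> Q"
    using p_image assms(1) by blast
  then show ?thesis
    using free_transitive assms unfolding acts_freely_transitively_on_fibers_def by simp
qed

definition fiber_rep :: "'b \<Rightarrow> 'a" where
  "fiber_rep q = (SOME y. y \<in> QT \<and> p y = q)"

lemma fiber_rep:
  assumes "q \<in> Q"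
  shows "fiber_rep q \<in> QT \<and> p (fiber_rep q) = q"
proof -
  have "\<exists>y. y \<in> QT \<and> p y = q"
    using p_image assms by blast
  then show ?thesis
    unfolding fiber_rep_def by (rule someI_ex)
qed

definition cocycle :: "'b \<Rightarrow> 'b \<Rightarrow> 'a \<Rightarrow> 'a" where
  "cocycle a b = (THE l. l \<in> L \<and> l (fiber_rep (opQ a b)) = opT (fiber_rep a) (fiber_rep b))"

lemma cocycle:
  assumes "a \<in> Q" "b \<in> Q"
  shows "cocycle a b \<in> L \<and> cocycle a b (fiber_rep (opQ a b)) = opT (fiber_rep a) (fiber_rep b)"
proof -
  have "\<exists>!l. l \<in> L \<and> l (fiber_rep (opQ a b)) = opT (fiber_rep a) (fiber_rep b)"
    using assms by (intro deck_unique) (simp_all add: fiber_rep opQ_closed opT_closed p_hom)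
  then show ?thesis
    unfolding cocycle_def by (rule theI')
qed

lemma ext_op_closed:
  "\<forall>x\<in>L \<times> Q. \<forall>y\<in>L \<times> Q. ext_op QT opQ cocycle x y \<in> L \<times> Q"
  using cocycle mult_closed opQ_closed unfolding ext_op_def by auto

definition trivialisation :: "('a \<Rightarrow> 'a) \<times> 'b \<Rightarrow> 'a" where
  "trivialisation x = fst x (fiber_rep (snd x))"

lemma trivialisation_hom:
  "quandle_hom (L \<times> Q) (ext_op QT opQ cocycle) QT opT trivialisation"
  unfolding quandle_hom_def
proof (intro conjI ballI)
  show "trivialisation \<in> L \<times> Q \<rightarrow> QT"
    unfolding trivialisation_def using fiber_rep deck_closed by auto
next
  fix x y assume "x \<in> L \<times> Q" "y \<in> L \<times> Q"
  then obtain l a m b where x: "x = (l, a)" "l \<in> L" "a \<in> Q" and y: "y = (m, b)" "m \<in> L" "b \<in> Q"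
    by auto
  have rep: "fiber_rep a \<in> QT" "fiber_rep b \<in> QT" "p (fiber_rep b) = b"
    using fiber_rep x y by auto
  have "trivialisation (ext_op QT opQ cocycle x y) = l (cocycle a b (fiber_rep (opQ a b)))"
    unfolding trivialisation_def ext_op_def deck_mult_def compose_def
    using x y fiber_rep opQ_closed by simp
  also have "\<dots> = opT (l (fiber_rep a)) (l (fiber_rep b))"
    using cocycle deck_hom x y rep by simp
  also have "\<dots> = opT (l (fiber_rep a)) (m (fiber_rep b))"
    using x y rep by (intro op_right_eq_if_same_fiber) (simp_all add: deck_closed deck_fiber)
  finally show "trivialisation (ext_op QT opQ cocycle x y) = opT (trivialisation x) (trivialisation y)"
    unfolding trivialisation_def using x y by simp
qed

lemma trivialisation_inj: "inj_on trivialisation (L \<times> Q)"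
proof (rule inj_onI)
  fix x y assume "x \<in> L \<times> Q" "y \<in> L \<times> Q" and eq: "trivialisation x = trivialisation y"
  then obtain l a m b where x: "x = (l, a)" "l \<in> L" "a \<in> Q" and y: "y = (m, b)" "m \<in> L" "b \<in> Q"
    by auto
  have eq': "l (fiber_rep a) = m (fiber_rep b)"
    using eq x y unfolding trivialisation_def by simp
  have "a = b"
    using arg_cong[OF eq', of p] x y fiber_rep deck_fiber by metis
  have "\<exists>!k. k \<in> L \<and> k (fiber_rep a) = l (fiber_rep a)"
    using x by (intro deck_unique) (simp_all add: fiber_rep deck_closed deck_fiber)
  moreover have "m (fiber_rep a) = l (fiber_rep a)"
    using eq' \<open>a = b\<close> by simp
  ultimately have "l = m"
    using x(2) y(2) by metis
  with \<open>a = b\<close> show "x = y"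
    using x y by simp
qed

lemma trivialisation_surj: "trivialisation ` (L \<times> Q) = QT"
proof
  show "trivialisation ` (L \<times> Q) \<subseteq> QT"
    using trivialisation_hom unfolding quandle_hom_def by auto
next
  show "QT \<subseteq> trivialisation ` (L \<times> Q)"
  proof
    fix y assume y: "y \<in> QT"
    then have py: "p y \<in> Q"
      using p_image by blast
    then obtain l where l: "l \<in> L" "l (fiber_rep (p y)) = y"
      using deck_unique[of "fiber_rep (p y)" y] y fiber_rep by blast
    then have "trivialisation (l, p y) = y"
      unfolding trivialisation_def by simp
    then show "y \<in> trivialisation ` (L \<times> Q)"
      using l py by (metis SigmaI image_eqI)
  qed
qed

lemma trivialisation_iso:
  "quandle_iso (L \<times> Q) (ext_op QT opQ cocycle) QT opT trivialisation"
  unfolding quandle_iso_def bij_betw_def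
  using trivialisation_hom trivialisation_inj trivialisation_surj by blast

end

theorem mainTheorem10:
  fixes QT :: "'a set" and opT :: "'a \<Rightarrow> 'a \<Rightarrow> 'a"
    and Q :: "'b set" and opQ :: "'b \<Rightarrow> 'b \<Rightarrow> 'b"
    and p :: "'a \<Rightarrow> 'b" and L :: "('a \<Rightarrow> 'a) set"
  assumes "finite QT" and "finite Q"
    and "quandle_covering QT opT Q opQ p"
    and "deck_subgroup QT opT p L"
    and "acts_freely_transitively_on_fibers QT p Q L"
  shows "\<exists>phi. (\<forall>a\<in>Q. \<forall>b\<in>Q. phi a b \<in> L) \<and>
           quandle (L \<times> Q) (ext_op QT opQ phi) \<and>
           (\<exists>f. quandle_iso (L \<times> Q) (ext_op QT opQ phi) QT opT f)"
proof -
  interpret simply_transitive_deck_action QT opT Q opQ p L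
    using assms(3-5) unfolding deck_subgroup_def by unfold_locales simp_all
  have "\<forall>a\<in>Q. \<forall>b\<in>Q. cocycle a b \<in> L"
    using cocycle by blast
  moreover have "quandle (L \<times> Q) (ext_op QT opQ cocycle)"
    by (rule quandle_if_iso_to_quandle[OF quandle_QT trivialisation_iso ext_op_closed])
  ultimately show ?thesis
    using trivialisation_iso by blast
qed

end
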